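(* Let $\alpha>0,\lambda>0$ and let $X>0$ a.s. with $\mathbb{E}[X]<\infty$. Then $I^\tau_\gamma(X_\tau)<\infty$ for every $\tau\in(0,1)$. Moreover, if $\mathbb{E}[X]=\alpha/\lambda$, then for every $\tau\in(0,1)$: if $\alpha\ge1$, $I^\tau_\gamma(X_\tau)\le\frac{\alpha\lambda\tau}{(1-\tau)^2}$; if $\alpha\in(0,1)$, $I^\tau_\gamma(X_\tau)\le\big(1+\frac1\alpha\big)\frac{\alpha\lambda\tau}{(1-\tau)^2}$.
   Context: For $\tau\in(0,1)$, the gamma smart path $X_\tau$ is defined as follows: conditionally on $X=x$, let $K$ be Poisson with mean $\lambda\tau x/(1-\tau)$; conditionally on $X=x,K=k$, let $Y=0$ if $k=0$ and let $Y$ be gamma distributed with shape $k$ and rate $\lambda\tau/(1-\tau)$ if $k\ge1$; let $\gamma(\alpha,\lambda)$ be a random variable with density $\frac{\lambda^\alpha}{\Gamma(\alpha)}u^{\alpha-1}e^{-\lambda u}$ independent of $(X,K,Y)$; set $X_\tau=(1-\tau)\gamma(\alpha,\lambda)+\tau Y$ (which has a smooth positive Lebesgue density). For a positive random variable $W$ with differentiable positive density $f_W$ and $\rho_W=(\log f_W)'$, the localized Fisher information is $I^\tau_\gamma(W)=\mathbb{E}\big[W\big(\rho_W(W)-\frac{\alpha-1}{W}+\frac{\lambda}{1-\tau}\big)^2\big]$. *)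

theory Defs
  imports "HOL-Probability.Probability"
begin

definition gamma_dens :: "real \<Rightarrow> real \<Rightarrow> real \<Rightarrow> real" where
  "gamma_dens a l x = (if x > 0 then l powr a / Gamma a * x powr (a - 1) * exp (- l * x) else 0)"

definition gamma_law :: "real \<Rightarrow> real \<Rightarrow> real measure" where
  "gamma_law a l = density lborel (\<lambda>x. ennreal (gamma_dens a l x))"

definition poisson_law :: "real \<Rightarrow> nat measure" where
  "poisson_law m = density (count_space UNIV) (\<lambda>k. ennreal (m ^ k / fact k * exp (- m)))"

text \<open>Conditional law of Y given X = x: K ~ Poisson(lambda tau x/(1-tau));
  Y = 0 if K = 0, Y ~ Gamma(K, lambda tau/(1-tau)) otherwise.\<close>
definition Y_cond_law :: "real \<Rightarrow> real \<Rightarrow> real \<Rightarrow> real measure" where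
  "Y_cond_law lam tau x =
     bind (poisson_law (lam * tau * x / (1 - tau)))
       (\<lambda>k. if k = 0 then return borel 0
            else gamma_law (real k) (lam * tau / (1 - tau)))"

text \<open>Law of the gamma smart path X_tau = (1-tau) gamma(alpha,lambda) + tau Y,
  where mu is the law of X and gamma(alpha,lambda) is independent of (X,K,Y).\<close>
definition smart_path_law :: "real \<Rightarrow> real \<Rightarrow> real measure \<Rightarrow> real \<Rightarrow> real measure" where
  "smart_path_law alpha lam mu tau =
     bind mu (\<lambda>x. bind (Y_cond_law lam tau x)
       (\<lambda>y. distr (gamma_law alpha lam) borel (\<lambda>g. (1 - tau) * g + tau * y)))"

definition is_diff_pos_density :: "real measure \<Rightarrow> (real \<Rightarrow> real) \<Rightarrow> bool" where
  "is_diff_pos_density nu f \<longleftrightarrow>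
     f \<in> borel_measurable borel \<and> (\<forall>w. 0 \<le> f w) \<and>
     nu = density lborel (\<lambda>w. ennreal (f w)) \<and>
     (\<forall>w>0. 0 < f w \<and> f differentiable (at w))"

definition loc_fisher :: "real \<Rightarrow> real \<Rightarrow> real \<Rightarrow> real measure \<Rightarrow> (real \<Rightarrow> real) \<Rightarrow> ennreal" where
  "loc_fisher alpha lam tau nu f =
     (\<integral>\<^sup>+ w. ennreal (w * (deriv f w / f w - (alpha - 1) / w + lam / (1 - tau))\<^sup>2) \<partial>nu)"

end

theory Submission
  imports Defs
begin

text \<open>Given \<open>X = x\<close>, the smart path is a Poisson\<open>(\<lambda>\<tau>x/(1-\<tau>))\<close> mixture of the laws
  \<open>\<gamma>(\<alpha> + k, b)\<close> with \<open>b = \<lambda>/(1-\<tau>)\<close>, because \<open>(1-\<tau>)\<gamma>(\<alpha>,\<lambda>)\<close> and \<open>\<tau>\<gamma>(k,\<lambda>\<tau>/(1-\<tau>))\<close> are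
  independent gamma variables with the common rate \<open>b\<close>. Averaging over \<open>X\<close>, the density of
  \<open>X\<^sub>\<tau>\<close> is \<open>\<Sum>\<^sub>k p\<^sub>k \<gamma>\<^sub>\<alpha>\<^sub>+\<^sub>k\<^sub>,\<^sub>b(w) = b\<^sup>\<alpha> w\<^sup>\<alpha>\<^sup>-\<^sup>1 e\<^sup>-\<^sup>b\<^sup>w P(w)\<close> for a power series \<open>P\<close> with nonnegative
  coefficients, so the localized score \<open>\<rho> - (\<alpha>-1)/w + b\<close> is just \<open>P'/P\<close>. Cauchy--Schwarz in
  the coefficients of \<open>P\<close> bounds the integrand by \<open>\<Sum>\<^sub>k k\<^sup>2 p\<^sub>k \<gamma>\<^sub>\<alpha>\<^sub>+\<^sub>k\<^sub>,\<^sub>b(w)/w\<close>, whose integral is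
  \<open>\<Sum>\<^sub>k k\<^sup>2 p\<^sub>k b/(\<alpha>+k-1) \<le> C\<^sub>\<alpha> b \<Sum>\<^sub>k k p\<^sub>k\<close> with \<open>C\<^sub>\<alpha> = 1\<close> for \<open>\<alpha> \<ge> 1\<close> and \<open>1/\<alpha>\<close> otherwise;
  finally \<open>\<Sum>\<^sub>k k p\<^sub>k = E[K] = \<lambda>\<tau> E[X]/(1-\<tau>)\<close>.\<close>

section \<open>Gamma densities\<close>

lemma gamma_dens_nonneg: "a > 0 \<Longrightarrow> 0 \<le> gamma_dens a b x"
  by (auto simp: gamma_dens_def intro!: mult_nonneg_nonneg divide_nonneg_pos)

lemma borel_measurable_gamma_dens[measurable]: "gamma_dens a b \<in> borel_measurable borel"
  unfolding gamma_dens_def by measurable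

lemma gamma_dens_eq_indicator:
  "gamma_dens a b x = b powr a / Gamma a * (indicator {0<..} x * x powr (a - 1) * exp (- b * x))"
  by (auto simp: gamma_dens_def indicator_def)

lemma sets_gamma_law[simp, measurable_cong]: "sets (gamma_law a b) = sets borel"
  by (simp add: gamma_law_def)

lemma space_gamma_law[simp]: "space (gamma_law a b) = UNIV"
  by (simp add: gamma_law_def)

lemma nn_integral_powr_mult_exp:
  fixes a b :: real
  assumes a: "a > 0" and b: "b > 0"
  shows "(\<integral>\<^sup>+x. ennreal (indicator {0<..} x * x powr (a - 1) * exp (- b * x)) \<partial>lborel)
           = ennreal (Gamma a / b powr a)"
proof -
  let ?g = "\<lambda>x::real. ennreal (indicator {0<..} x * x powr (a - 1) * exp (- b * x))"
  let ?f = "\<lambda>t::real. ennreal (indicator {0..} t * t powr (a - 1) / exp t)"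
  have "ennreal (Gamma a) = (\<integral>\<^sup>+t. ?f t \<partial>lborel)"
    using Gamma_conv_nn_integral_real[OF a] by simp
  also have "\<dots> = ennreal b * (\<integral>\<^sup>+x. ?f (0 + b * x) \<partial>lborel)"
    using b by (subst nn_integral_real_affine[where c = b and t = 0]) auto
  also have "(\<integral>\<^sup>+x. ?f (0 + b * x) \<partial>lborel) = (\<integral>\<^sup>+x. ennreal (b powr (a - 1)) * ?g x \<partial>lborel)"
  proof (intro nn_integral_cong)
    fix x :: real
    show "?f (0 + b * x) = ennreal (b powr (a - 1)) * ?g x"
      using b by (cases "x > 0"; cases "x = 0")
        (auto simp: indicator_def ennreal_mult'[symmetric] powr_mult exp_minus field_simps zero_le_mult_iff)
  qed
  also have "\<dots> = ennreal (b powr (a - 1)) * (\<integral>\<^sup>+x. ?g x \<partial>lborel)"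
    by (rule nn_integral_cmult) measurable
  also have "ennreal b * (ennreal (b powr (a - 1)) * (\<integral>\<^sup>+x. ?g x \<partial>lborel))
             = (\<integral>\<^sup>+x. ?g x \<partial>lborel) * ennreal (b powr a)"
  proof -
    have "b * b powr (a - 1) = b powr a" using b by (simp add: powr_mult_base)
    then have bb: "ennreal b * ennreal (b powr (a - 1)) = ennreal (b powr a)"
      using b by (metis ennreal_mult less_imp_le powr_ge_zero)
    show ?thesis unfolding mult.assoc[symmetric] bb by (rule mult.commute)
  qed
  finally have "ennreal (Gamma a) = (\<integral>\<^sup>+x. ?g x \<partial>lborel) * ennreal (b powr a)" .
  then have "(\<integral>\<^sup>+x. ?g x \<partial>lborel) = ennreal (Gamma a) / ennreal (b powr a)"
    using b by (simp add: ennreal_mult_divide_eq)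
  also have "\<dots> = ennreal (Gamma a / b powr a)"
    using a b by (simp add: divide_ennreal Gamma_real_pos)
  finally show ?thesis .
qed

lemma nn_integral_gamma_dens:
  assumes "a > 0" "b > 0"
  shows "(\<integral>\<^sup>+x. ennreal (gamma_dens a b x) \<partial>lborel) = 1"
proof -
  have G: "Gamma a > 0" using assms by (simp add: Gamma_real_pos)
  then have "Gamma a \<noteq> 0" by simp
  have "(\<integral>\<^sup>+x. ennreal (gamma_dens a b x) \<partial>lborel)
      = (\<integral>\<^sup>+x. ennreal (b powr a / Gamma a)
               * ennreal (indicator {0<..} x * x powr (a - 1) * exp (- b * x)) \<partial>lborel)"
    unfolding gamma_dens_eq_indicator using G
    by (intro nn_integral_cong) (auto simp: ennreal_mult'[symmetric] indicator_def)
  also have "\<dots> = ennreal (b powr a / Gamma a) * ennreal (Gamma a / b powr a)"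
    by (subst nn_integral_cmult) (use nn_integral_powr_mult_exp[OF assms] in auto)
  also have "\<dots> = 1"
    using G \<open>Gamma a \<noteq> 0\<close> assms by (simp add: ennreal_mult'[symmetric])
  finally show ?thesis .
qed

lemma prob_space_gamma_law: "a > 0 \<Longrightarrow> b > 0 \<Longrightarrow> prob_space (gamma_law a b)"
  unfolding gamma_law_def by (rule prob_spaceI) (auto simp: nn_integral_gamma_dens emeasure_density)

lemma gamma_dens_rescale:
  assumes "s > 0" "b > 0"
  shows "s * gamma_dens a (b / s) (s * x) = gamma_dens a b x"
proof (cases "x > 0")
  case True
  have "(b / s) powr a * s powr a = b powr a" using assms by (simp add: powr_divide)
  moreover have "s * (s * x) powr (a - 1) = s powr a * x powr (a - 1)"
    using assms True by (simp add: powr_mult powr_diff)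
  ultimately have "s * ((b / s) powr a * (s * x) powr (a - 1)) = b powr a * x powr (a - 1)"
    by (metis mult.assoc mult.left_commute)
  then show ?thesis using True assms by (simp add: gamma_dens_def)
next
  case False
  then show ?thesis using assms by (simp add: gamma_dens_def zero_less_mult_iff)
qed

lemma distr_gamma_law_affine:
  assumes s: "s > 0" and b: "b > 0"
  shows "distr (gamma_law a b) borel (\<lambda>x. s * x + t)
           = density lborel (\<lambda>w. ennreal (gamma_dens a (b / s) (w - t)))"
proof (rule measure_eqI)
  fix A assume "A \<in> sets (distr (gamma_law a b) borel (\<lambda>x. s * x + t))"
  then have A[measurable]: "A \<in> sets borel" by simp
  have "emeasure (distr (gamma_law a b) borel (\<lambda>x. s * x + t)) A
      = (\<integral>\<^sup>+x. indicator A (s * x + t) \<partial>gamma_law a b)"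
    by (simp add: nn_integral_distr flip: nn_integral_indicator)
  also have "\<dots> = (\<integral>\<^sup>+x. ennreal (gamma_dens a b x) * indicator A (s * x + t) \<partial>lborel)"
    unfolding gamma_law_def by (simp add: nn_integral_density)
  also have "\<dots> = (\<integral>\<^sup>+x. ennreal s * (ennreal (gamma_dens a (b / s) ((t + s * x) - t))
                              * indicator A (t + s * x)) \<partial>lborel)"
    using s b by (intro nn_integral_cong)
      (simp add: mult.assoc[symmetric] ennreal_mult'[symmetric] gamma_dens_rescale add.commute)
  also have "\<dots> = (\<integral>\<^sup>+w. ennreal (gamma_dens a (b / s) (w - t)) * indicator A w \<partial>lborel)"
    using s by (subst nn_integral_real_affine[where c = s and t = t]) (auto simp: nn_integral_cmult)
  also have "\<dots> = emeasure (density lborel (\<lambda>w. ennreal (gamma_dens a (b / s) (w - t)))) A"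
    by (simp add: emeasure_density)
  finally show "emeasure (distr (gamma_law a b) borel (\<lambda>x. s * x + t)) A
      = emeasure (density lborel (\<lambda>w. ennreal (gamma_dens a (b / s) (w - t)))) A" .
qed simp

lemma gamma_dens_mult_eq_beta_integrand:
  fixes a k b w t :: real
  assumes a: "a > 0" and k: "k > 0" and w: "w > 0"
  shows "gamma_dens a b (w - w * t) * gamma_dens k b (w * t)
           = b powr (a + k) / (Gamma a * Gamma k) * w powr (a + k - 2) * exp (- b * w)
             * (t powr (k - 1) * (1 - t) powr (a - 1) * indicator {0..1} t)"
proof (cases "0 < t \<and> t < 1")
  case True
  have "(w - w * t) powr (a - 1) = w powr (a - 1) * (1 - t) powr (a - 1)"
    using True w by (simp add: powr_mult[symmetric] algebra_simps)
  moreover have "(w * t) powr (k - 1) = w powr (k - 1) * t powr (k - 1)"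
    using True w by (simp add: powr_mult)
  moreover have "w powr (a + k - 2) = w powr (a - 1) * w powr (k - 1)"
    using w by (simp add: powr_add[symmetric])
  moreover have "exp (- b * w) = exp (- b * (w - w * t)) * exp (- b * (w * t))"
    by (simp add: exp_add[symmetric] algebra_simps)
  moreover have "w - w * t > 0" "w * t > 0" using True w by (simp_all add: algebra_simps)
  ultimately show ?thesis using True by (simp add: gamma_dens_def powr_add indicator_def)
next
  case False
  then have "w - w * t \<le> 0 \<or> w * t \<le> 0"
    using w by (auto simp: mult_le_cancel_left1 intro: mult_nonneg_nonpos)
  moreover have "t powr (k - 1) * (1 - t) powr (a - 1) * indicator {0..1} t = 0"
    using False by (auto simp: indicator_def)
  ultimately show ?thesis by (auto simp: gamma_dens_def)
qed

text \<open>The substitution \<open>u = w t\<close> turns the convolution integral into a Beta integral.\<close>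

lemma gamma_dens_convolution:
  fixes a k b w :: real
  assumes a: "a > 0" and k: "k > 0" and b: "b > 0"
  shows "(\<integral>\<^sup>+u. ennreal (gamma_dens a b (w - u)) * ennreal (gamma_dens k b u) \<partial>lborel)
           = ennreal (gamma_dens (a + k) b w)"
proof (cases "w > 0")
  case False
  then have "(\<integral>\<^sup>+u. ennreal (gamma_dens a b (w - u)) * ennreal (gamma_dens k b u) \<partial>lborel)
           = (\<integral>\<^sup>+(u::real). 0 \<partial>lborel)"
    by (intro nn_integral_cong) (auto simp: gamma_dens_def)
  then show ?thesis using False by (simp add: gamma_dens_def)
next
  case w: True
  have G: "Gamma a > 0" "Gamma k > 0" "Gamma (a + k) > 0"
    using a k by (auto intro: Gamma_real_pos)
  define D where "D = b powr (a + k) / (Gamma a * Gamma k) * w powr (a + k - 2) * exp (- b * w)"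
  have D: "D \<ge> 0" unfolding D_def using G by auto
  let ?B = "\<lambda>t::real. t powr (k - 1) * (1 - t) powr (a - 1)"
  have "(\<integral>\<^sup>+u. ennreal (gamma_dens a b (w - u)) * ennreal (gamma_dens k b u) \<partial>lborel)
      = ennreal \<bar>w\<bar> * (\<integral>\<^sup>+t. ennreal (gamma_dens a b (w - (0 + w * t)))
                                * ennreal (gamma_dens k b (0 + w * t)) \<partial>lborel)"
    using w by (intro nn_integral_real_affine) auto
  also have "(\<integral>\<^sup>+t. ennreal (gamma_dens a b (w - (0 + w * t)))
                       * ennreal (gamma_dens k b (0 + w * t)) \<partial>lborel)
      = (\<integral>\<^sup>+t. ennreal D * (ennreal (?B t) * indicator {0..1} t) \<partial>lborel)"
  proof (intro nn_integral_cong)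
    fix t :: real
    have "ennreal (gamma_dens a b (w - (0 + w * t))) * ennreal (gamma_dens k b (0 + w * t))
        = ennreal (D * (?B t * indicator {0..1} t))"
      using gamma_dens_mult_eq_beta_integrand[OF a k w, of b t]
      by (simp add: D_def gamma_dens_nonneg a k flip: ennreal_mult)
    also have "\<dots> = ennreal D * (ennreal (?B t) * indicator {0..1} t)"
      using D by (auto simp: ennreal_mult' indicator_def)
    finally show "ennreal (gamma_dens a b (w - (0 + w * t))) * ennreal (gamma_dens k b (0 + w * t))
        = ennreal D * (ennreal (?B t) * indicator {0..1} t)" .
  qed
  also have "\<dots> = ennreal D * (\<integral>\<^sup>+t. ennreal (?B t) * indicator {0..1} t \<partial>lborel)"
    by (rule nn_integral_cmult) measurable
  also have "(\<integral>\<^sup>+t. ennreal (?B t) * indicator {0..1} t \<partial>lborel) = ennreal (Beta k a)"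
    by (rule nn_integral_has_integral_lebesgue') (use has_integral_Beta_real[OF k a] in auto)
  finally have "(\<integral>\<^sup>+u. ennreal (gamma_dens a b (w - u)) * ennreal (gamma_dens k b u) \<partial>lborel)
      = ennreal (w * D * Beta k a)"
    using w D G by (simp add: ennreal_mult'[symmetric] Beta_def mult.assoc)
  also have "w * D * Beta k a = gamma_dens (a + k) b w"
  proof -
    have "w * w powr (a + k - 2) = w powr (a + k - 1)"
      using w by (simp add: powr_mult_base)
    then show ?thesis using w G unfolding D_def gamma_dens_def Beta_def
      by (simp add: field_simps add.commute)
  qed
  finally show ?thesis .
qed

lemma gamma_dens_div:
  assumes "a > 1" "b > 0"
  shows "gamma_dens a b w / w = b / (a - 1) * gamma_dens (a - 1) b w"
proof (cases "w > 0")
  case True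
  define c where "c = a - 1"
  have "c > 0" "Gamma c > 0" using assms by (simp_all add: c_def)
  moreover have "Gamma a = c * Gamma c"
    using Gamma_plus1[of c] \<open>c > 0\<close> nonpos_Ints_nonpos[of c] by (force simp: c_def)
  moreover have "b powr a = b * b powr c" and "w powr c = w * w powr (c - 1)"
    using True assms by (simp_all add: powr_mult_base c_def)
  ultimately show ?thesis
    using True unfolding gamma_dens_def c_def[symmetric] by (simp add: field_simps)
qed (simp add: gamma_dens_def)

lemma poisson_pmf_sums: "(m::real) \<ge> 0 \<Longrightarrow> (\<lambda>k. m ^ k / fact k * exp (- m)) sums 1"
  using sums_mult2[OF exp_converges[of m], of "exp (- m)"]
  by (simp add: divide_inverse mult.commute exp_minus)

lemma poisson_mean_sums: "(\<lambda>k. real k * (m ^ k / fact k * exp (- m))) sums (m::real)"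
proof -
  have "(\<lambda>k. m * (m ^ k / fact k * exp (- m))) sums m"
    using sums_mult[OF sums_mult2[OF exp_converges[of m], of "exp (- m)"], of m]
    by (simp add: divide_inverse mult.commute exp_minus_inverse)
  moreover have "(\<lambda>k. m * (m ^ k / fact k * exp (- m)))
               = (\<lambda>k. real (Suc k) * (m ^ Suc k / fact (Suc k) * exp (- m)))"
    by (rule ext) (simp add: field_simps del: of_nat_Suc)
  ultimately have "(\<lambda>k. real (Suc k) * (m ^ Suc k / fact (Suc k) * exp (- m))) sums m"
    by (simp only:)
  from sums_Suc[OF this] show ?thesis by simp
qed

lemma Gamma_add_Suc:
  assumes "a > 0" shows "Gamma (a + real (Suc n)) = (a + real n) * Gamma (a + real n)"
proof -
  have "a + real n \<notin> \<int>\<^sub>\<le>\<^sub>0" using assms nonpos_Ints_nonpos by force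
  then show ?thesis using Gamma_plus1[of "a + real n"] by (simp add: algebra_simps)
qed

lemma summable_square_power_div_Gamma:
  fixes a r :: real
  assumes a: "a > 0" and r: "r \<ge> 0"
  shows "summable (\<lambda>k. (real k + 1)\<^sup>2 * r ^ k / Gamma (a + real k))"
proof (rule summable_ratio_test[where c = "1/2" and N = "nat \<lceil>8 * r\<rceil>"])
  fix n assume "n \<ge> nat \<lceil>8 * r\<rceil>"
  then have n: "8 * r \<le> a + real n" using a by linarith
  have G: "Gamma (a + real n) > 0" "a + real n > 0" using a by simp_all
  have "(real n + 2)\<^sup>2 * r \<le> 4 * (real n + 1)\<^sup>2 * r"
    using r by (intro mult_right_mono) (auto simp: power2_eq_square algebra_simps)
  also have "\<dots> \<le> (1/2) * (real n + 1)\<^sup>2 * (a + real n)"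
    using mult_left_mono[OF n, of "(real n + 1)\<^sup>2"] by (simp add: algebra_simps)
  finally have key: "(real n + 2)\<^sup>2 * r \<le> (1/2) * (real n + 1)\<^sup>2 * (a + real n)" .
  have "norm ((real (Suc n) + 1)\<^sup>2 * r ^ Suc n / Gamma (a + real (Suc n)))
        = ((real n + 2)\<^sup>2 * r) * r ^ n / ((a + real n) * Gamma (a + real n))"
    using r G by (subst Gamma_add_Suc[OF a]) (simp add: abs_mult)
  also have "\<dots> \<le> ((1/2) * (real n + 1)\<^sup>2 * (a + real n)) * r ^ n / ((a + real n) * Gamma (a + real n))"
    using key r G by (intro divide_right_mono mult_right_mono) auto
  also have "\<dots> = 1/2 * norm ((real n + 1)\<^sup>2 * r ^ n / Gamma (a + real n))"
    using r G by (simp add: abs_mult)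
  finally show "norm ((real (Suc n) + 1)\<^sup>2 * r ^ Suc n / Gamma (a + real (Suc n)))
                  \<le> 1/2 * norm ((real n + 1)\<^sup>2 * r ^ n / Gamma (a + real n))" .
qed simp

text \<open>Summed AM--GM: \<open>2 k \<le> s + k\<^sup>2 / s\<close> with \<open>s\<close> the ratio of the second to the first moment.\<close>

lemma suminf_first_moment_square_le:
  fixes v :: "nat \<Rightarrow> real"
  assumes v: "\<And>k. v k \<ge> 0" and sv: "summable v" and s2: "summable (\<lambda>k. (real k)\<^sup>2 * v k)"
  shows "(\<Sum>k. real k * v k)\<^sup>2 \<le> (\<Sum>k. v k) * (\<Sum>k. (real k)\<^sup>2 * v k)"
proof -
  have k_le: "real k * v k \<le> (real k)\<^sup>2 * v k" for k
  proof -
    have "real k \<le> (real k)\<^sup>2" by (cases k) (auto simp: power2_eq_square)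
    then show ?thesis using v[of k] by (rule mult_right_mono)
  qed
  have s1: "summable (\<lambda>k. real k * v k)"
    using v k_le by (intro summable_comparison_test'[OF s2, of 0]) auto
  define U where "U = (\<Sum>k. real k * v k)"
  define V where "V = (\<Sum>k. v k)"
  define T where "T = (\<Sum>k. (real k)\<^sup>2 * v k)"
  have "U \<ge> 0" unfolding U_def using v by (intro suminf_nonneg s1) auto
  have "V \<ge> 0" unfolding V_def using v by (intro suminf_nonneg sv) auto
  have "U \<le> T" unfolding U_def T_def by (rule suminf_le[OF k_le s1 s2])
  show ?thesis
  proof (cases "U = 0")
    case True
    then show ?thesis using \<open>V \<ge> 0\<close> \<open>U \<le> T\<close> by (simp flip: U_def V_def T_def)
  next
    case False
    with \<open>U \<ge> 0\<close> \<open>U \<le> T\<close> have "U > 0" "T > 0" by auto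
    define s where "s = T / U"
    have "s > 0" unfolding s_def using \<open>U > 0\<close> \<open>T > 0\<close> by simp
    have "2 * (real k * v k) \<le> s * v k + (real k)\<^sup>2 * v k / s" for k
    proof -
      have "0 \<le> (s - real k)\<^sup>2 * v k" using v[of k] by simp
      then show ?thesis using \<open>s > 0\<close> by (simp add: field_simps power2_eq_square)
    qed
    then have "(\<Sum>k. 2 * (real k * v k)) \<le> (\<Sum>k. s * v k + (real k)\<^sup>2 * v k / s)"
      by (intro suminf_le summable_mult s1 summable_add summable_divide sv s2)
    also have "(\<Sum>k. s * v k + (real k)\<^sup>2 * v k / s) = s * V + T / s"
      unfolding V_def T_def
      by (simp add: suminf_add[symmetric] suminf_mult suminf_divide summable_mult summable_divide sv s2)
    finally have "2 * U \<le> s * V + T / s"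
      by (simp add: U_def suminf_mult s1)
    then have "2 * U \<le> T * V / U + U"
      unfolding s_def using \<open>U > 0\<close> \<open>T > 0\<close> by simp
    then have "U\<^sup>2 \<le> V * T"
      using \<open>U > 0\<close> by (simp add: field_simps power2_eq_square)
    then show ?thesis unfolding U_def V_def T_def .
  qed
qed

lemma AE_eq_continuous_on_imp_eq:
  fixes f g :: "real \<Rightarrow> real"
  assumes U: "open U" and f: "continuous_on U f" and g: "continuous_on U g"
    and ae: "AE y in lborel. f y = g y" and x: "x \<in> U"
  shows "f x = g x"
proof (rule ccontr)
  assume ne: "f x \<noteq> g x"
  define S where "S = (\<lambda>y. f y - g y) -` (- {0}) \<inter> U"
  have "continuous_on U (\<lambda>y. f y - g y)" by (intro continuous_intros f g)
  moreover have "open (- {0::real})" by auto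
  ultimately have "open S" unfolding S_def using continuous_on_open_vimage[OF U] by blast
  moreover have "x \<in> S" unfolding S_def using ne x by simp
  ultimately obtain e where e: "e > 0" "ball x e \<subseteq> S" by (meson open_contains_ball)
  from ae obtain N where N: "{y. f y \<noteq> g y} \<subseteq> N" "emeasure lborel N = 0" "N \<in> sets lborel"
    by (auto elim!: AE_E)
  have "ball x e \<subseteq> N" using e(2) N(1) unfolding S_def by fastforce
  then have "emeasure lborel (ball x e) \<le> 0" using emeasure_mono[OF _ N(3)] N(2) by metis
  moreover have "emeasure lborel (ball x e) = ennreal (2 * e)"
    unfolding ball_eq_greaterThanLessThan using e by simp
  ultimately show False using e by simp
qed

lemma nat_div_add_minus_one_le:
  assumes "alpha > 0" "k \<ge> 1"
  shows "real k / (alpha + real k - 1) \<le> (if alpha \<ge> 1 then 1 else 1 / alpha)"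
proof (cases "alpha \<ge> 1")
  case False
  have "(1 - alpha) * (real k - 1) \<ge> 0" using False assms by simp
  then show ?thesis using False assms by (simp add: field_simps)
qed (use assms in \<open>simp add: field_simps\<close>)

text \<open>Junk values outside the space of the Giry algebra never enter preimages of its measurable
  sets, so on a null set they are invisible to \<open>bind\<close>.\<close>

lemma bind_eq_bind_off_null_set:
  assumes g: "g \<in> measurable M (subprob_algebra N)"
    and S: "S \<in> null_sets M"
    and eq: "\<And>x. x \<in> space M - S \<Longrightarrow> f x = g x"
    and junk: "\<And>x. x \<in> S \<Longrightarrow> f x \<notin> space (subprob_algebra N)"
    and sets_f: "\<And>x. x \<in> space M \<Longrightarrow> sets (f x) = sets N"
    and ne: "space M \<noteq> {}"
  shows "bind M f = bind M g"
proof -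
  have "distr M (subprob_algebra N) f = distr M (subprob_algebra N) g"
    unfolding distr_def
  proof (rule measure_of_eq)
    show "sets (subprob_algebra N) \<subseteq> Pow (space (subprob_algebra N))"
      by (rule sets.space_closed)
    fix A assume "A \<in> sigma_sets (space (subprob_algebra N)) (sets (subprob_algebra N))"
    then have A: "A \<in> sets (subprob_algebra N)" by (simp add: sets.sigma_sets_eq)
    then have A_space: "A \<subseteq> space (subprob_algebra N)" by (rule sets.sets_into_space)
    have "f -` A \<inter> space M = (g -` A \<inter> space M) - S"
    proof (intro set_eqI iffI)
      fix x assume x: "x \<in> f -` A \<inter> space M"
      then have "x \<notin> S" using junk A_space by blast
      then show "x \<in> (g -` A \<inter> space M) - S" using x eq by auto
    next
      fix x assume "x \<in> (g -` A \<inter> space M) - S"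
      then show "x \<in> f -` A \<inter> space M" using eq by auto
    qed
    then show "emeasure M (f -` A \<inter> space M) = emeasure M (g -` A \<inter> space M)"
      using emeasure_Diff_null_set[OF S measurable_sets[OF g A]] by simp
  qed
  moreover have "subprob_algebra (f (SOME x. x \<in> space M)) = subprob_algebra N"
    using sets_f[OF someI_ex[of "\<lambda>x. x \<in> space M"]] ne by (intro subprob_algebra_cong) auto
  ultimately show ?thesis
    using bind_nonempty[OF ne, of f] bind_nonempty''[OF g ne] by simp
qed

section \<open>Gamma mixtures as power series\<close>

text \<open>A mixture \<open>\<Sum>\<^sub>k p\<^sub>k \<gamma>(\<alpha> + k, b)\<close> factors as \<open>b\<^sup>\<alpha> w\<^sup>\<alpha>\<^sup>-\<^sup>1 e\<^sup>-\<^sup>b\<^sup>w\<close> times a power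
  series with nonnegative coefficients, so its score reduces to the logarithmic derivative of
  that series.\<close>

locale gamma_mixture =
  fixes alpha b :: real and p :: "nat \<Rightarrow> real"
  assumes alpha: "alpha > 0" and b: "b > 0"
    and p_nonneg: "\<And>k. 0 \<le> p k" and p_le_1: "\<And>k. p k \<le> 1" and p_0: "p 0 > 0"
begin

definition pcoeff :: "nat \<Rightarrow> real" where
  "pcoeff k = p k * b ^ k / Gamma (alpha + real k)"

definition pseries :: "real \<Rightarrow> real" where
  "pseries w = (\<Sum>k. pcoeff k * w ^ k)"

definition pseries' :: "real \<Rightarrow> real" where
  "pseries' w = (\<Sum>k. diffs pcoeff k * w ^ k)"

definition base_factor :: "real \<Rightarrow> real" where
  "base_factor w = b powr alpha * w powr (alpha - 1) * exp (- b * w)"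

definition mix_dens :: "real \<Rightarrow> real" where
  "mix_dens w = (if w > 0 then base_factor w * pseries w else 0)"

definition mix_dens' :: "real \<Rightarrow> real" where
  "mix_dens' w = base_factor w * (((alpha - 1) / w - b) * pseries w + pseries' w)"

lemma pcoeff_nonneg: "pcoeff k \<ge> 0"
  unfolding pcoeff_def using p_nonneg b alpha by (simp add: add_pos_nonneg)

lemma abs_pcoeff_power_le: "\<bar>pcoeff k * z ^ k\<bar> \<le> (b * \<bar>z\<bar>) ^ k / Gamma (alpha + real k)"
proof -
  have G: "Gamma (alpha + real k) > 0" using alpha by simp
  then have "\<bar>pcoeff k * z ^ k\<bar> = p k * ((b * \<bar>z\<bar>) ^ k / Gamma (alpha + real k))"
    unfolding pcoeff_def using p_nonneg[of k] b by (simp add: abs_mult power_abs power_mult_distrib)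
  also have "\<dots> \<le> (b * \<bar>z\<bar>) ^ k / Gamma (alpha + real k)"
    using G b p_nonneg[of k] p_le_1[of k] by (intro mult_left_le_one_le) auto
  finally show ?thesis .
qed

lemma summable_square_pcoeff_power: "summable (\<lambda>k. (real k)\<^sup>2 * (pcoeff k * z ^ k))"
proof (rule summable_comparison_test'[OF summable_square_power_div_Gamma[OF alpha, of "b * \<bar>z\<bar>"]])
  fix k
  have "(real k)\<^sup>2 \<le> (real k + 1)\<^sup>2" by (simp add: power_mono)
  then show "norm ((real k)\<^sup>2 * (pcoeff k * z ^ k)) \<le> (real k + 1)\<^sup>2 * (b * \<bar>z\<bar>) ^ k / Gamma (alpha + real k)"
    using abs_pcoeff_power_le[of k z] alpha
    by (simp add: abs_mult mult_mono times_divide_eq_right[symmetric] del: times_divide_eq_right)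
qed (use b in simp)

lemma summable_pcoeff_power: "summable (\<lambda>k. pcoeff k * z ^ k)"
proof (rule summable_comparison_test'[OF summable_square_power_div_Gamma[OF alpha, of "b * \<bar>z\<bar>"]])
  fix k
  have "0 \<le> (b * \<bar>z\<bar>) ^ k / Gamma (alpha + real k)" using alpha b by simp
  moreover have "1 \<le> (real k + 1)\<^sup>2" by (simp add: one_le_power)
  ultimately have "(b * \<bar>z\<bar>) ^ k / Gamma (alpha + real k)
                     \<le> (real k + 1)\<^sup>2 * (b * \<bar>z\<bar>) ^ k / Gamma (alpha + real k)"
    using mult_right_mono[of 1 "(real k + 1)\<^sup>2"] by fastforce
  then show "norm (pcoeff k * z ^ k) \<le> (real k + 1)\<^sup>2 * (b * \<bar>z\<bar>) ^ k / Gamma (alpha + real k)"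
    using abs_pcoeff_power_le[of k z] by simp
qed (use b in simp)

lemma pseries_has_derivative: "(pseries has_real_derivative pseries' w) (at w)"
  unfolding pseries_def[abs_def] pseries'_def
  by (rule termdiffs_strong[OF summable_pcoeff_power[of "\<bar>w\<bar> + 1"]]) simp

lemma summable_diffs_pcoeff_power: "summable (\<lambda>k. diffs pcoeff k * z ^ k)"
  using termdiff_converges_all[of pcoeff z] summable_pcoeff_power by auto

lemma continuous_on_pseries: "continuous_on A pseries"
  using pseries_has_derivative by (intro continuous_at_imp_continuous_on) (auto intro: DERIV_isCont)

lemma continuous_on_pseries': "continuous_on A pseries'"
proof -
  have "(pseries' has_real_derivative (\<Sum>k. diffs (diffs pcoeff) k * w ^ k)) (at w)" for w
    unfolding pseries'_def[abs_def]
    by (rule termdiffs_strong[OF summable_diffs_pcoeff_power[of "\<bar>w\<bar> + 1"]]) simp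
  then show ?thesis by (intro continuous_at_imp_continuous_on) (auto intro: DERIV_isCont)
qed

lemma mult_pseries'_eq: "w * pseries' w = (\<Sum>k. real k * (pcoeff k * w ^ k))"
proof -
  have "(\<lambda>n. w * (diffs pcoeff n * w ^ n)) sums (w * pseries' w)"
    unfolding pseries'_def by (intro sums_mult summable_sums summable_diffs_pcoeff_power)
  moreover have "(\<lambda>n. w * (diffs pcoeff n * w ^ n)) = (\<lambda>n. real (Suc n) * (pcoeff (Suc n) * w ^ Suc n))"
    by (rule ext) (simp add: diffs_def algebra_simps del: of_nat_Suc)
  ultimately have "(\<lambda>n. real (Suc n) * (pcoeff (Suc n) * w ^ Suc n)) sums (w * pseries' w)" by simp
  from sums_Suc[OF this] show ?thesis by (simp add: sums_iff)
qed

lemma pseries_pos: "w \<ge> 0 \<Longrightarrow> pseries w > 0"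
proof -
  assume "w \<ge> 0"
  then have "(\<Sum>k\<in>{0}. pcoeff k * w ^ k) \<le> pseries w"
    unfolding pseries_def using pcoeff_nonneg by (intro sum_le_suminf summable_pcoeff_power) auto
  moreover have "pcoeff 0 > 0" unfolding pcoeff_def using p_0 alpha by simp
  ultimately show ?thesis by simp
qed

lemma base_factor_pos: "w > 0 \<Longrightarrow> base_factor w > 0"
  unfolding base_factor_def using b by simp

lemma base_factor_has_derivative:
  assumes "w > 0"
  shows "(base_factor has_real_derivative base_factor w * ((alpha - 1) / w - b)) (at w)"
proof -
  have "(base_factor has_real_derivative
           b powr alpha * w powr (alpha - 1) * (exp (- b * w) * - b)
           + b powr alpha * ((alpha - 1) * w powr (alpha - 1 - 1)) * exp (- b * w)) (at w)"
    unfolding base_factor_def[abs_def]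
    by (intro DERIV_mult' DERIV_cmult has_real_derivative_powr assms)
       (auto intro!: derivative_eq_intros)
  moreover have "w powr (alpha - 2) = w powr (alpha - 1) / w"
    using assms by (simp add: powr_diff power2_eq_square flip: diff_diff_eq)
  ultimately show ?thesis
    using assms by (simp add: base_factor_def field_simps)
qed

lemma mix_dens_has_derivative:
  assumes "w > 0"
  shows "(mix_dens has_real_derivative mix_dens' w) (at w)"
proof -
  have "((\<lambda>w. base_factor w * pseries w) has_real_derivative mix_dens' w) (at w)"
    using DERIV_mult[OF base_factor_has_derivative[OF assms] pseries_has_derivative]
    by (simp add: mix_dens'_def algebra_simps)
  then show ?thesis
    by (rule has_field_derivative_transform_within_open[where S = "{0<..}"])
       (use assms in \<open>auto simp: mix_dens_def\<close>)
qed

lemma continuous_on_mix_dens: "continuous_on {0<..} mix_dens"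
  using mix_dens_has_derivative by (intro continuous_at_imp_continuous_on) (auto intro: DERIV_isCont)

lemma borel_measurable_pseries[measurable]: "pseries \<in> borel_measurable borel"
  using continuous_on_pseries by (rule borel_measurable_continuous_onI)

lemma borel_measurable_pseries'[measurable]: "pseries' \<in> borel_measurable borel"
  using continuous_on_pseries' by (rule borel_measurable_continuous_onI)

lemma borel_measurable_mix_dens[measurable]: "mix_dens \<in> borel_measurable borel"
  unfolding mix_dens_def[abs_def] base_factor_def by measurable

lemma mix_dens_pos: "w > 0 \<Longrightarrow> mix_dens w > 0"
  unfolding mix_dens_def using base_factor_pos pseries_pos by simp

lemma mix_dens_nonneg: "mix_dens w \<ge> 0"
  using mix_dens_pos[of w] by (cases "w > 0") (auto simp: mix_dens_def)

lemma weight_mult_gamma_dens_eq: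
  assumes "w > 0"
  shows "p k * gamma_dens (alpha + real k) b w = base_factor w * (pcoeff k * w ^ k)"
proof -
  have "b powr (alpha + real k) = b powr alpha * b ^ k"
    using b by (simp add: powr_add powr_realpow)
  moreover have "w powr (alpha + real k - 1) = w powr (alpha - 1) * w ^ k"
  proof -
    have "alpha + real k - 1 = (alpha - 1) + real k" by simp
    then show ?thesis using assms by (simp only: powr_add powr_realpow)
  qed
  moreover have "Gamma (alpha + real k) > 0" using alpha by simp
  ultimately show ?thesis using assms
    unfolding gamma_dens_def base_factor_def pcoeff_def by (simp add: field_simps add_pos_nonneg alpha)
qed

lemma mix_dens_sums: "(\<lambda>k. p k * gamma_dens (alpha + real k) b w) sums mix_dens w"
proof (cases "w > 0")
  case True
  have "(\<lambda>k. base_factor w * (pcoeff k * w ^ k)) sums mix_dens w"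
    unfolding mix_dens_def pseries_def using True
    by (simp add: sums_mult summable_sums summable_pcoeff_power)
  then show ?thesis using True by (simp add: weight_mult_gamma_dens_eq)
qed (simp add: gamma_dens_def mix_dens_def)

lemma suminf_ennreal_mix_dens: "(\<Sum>k. ennreal (p k * gamma_dens (alpha + real k) b w)) = ennreal (mix_dens w)"
  using p_nonneg gamma_dens_nonneg alpha
  by (intro suminf_ennreal_eq mix_dens_sums) (auto intro!: mult_nonneg_nonneg add_pos_nonneg)

lemma mix_dens_score_eq:
  assumes "w > 0"
  shows "mix_dens' w / mix_dens w - (alpha - 1) / w + b = pseries' w / pseries w"
  using assms base_factor_pos[OF assms] pseries_pos[of w]
  by (simp add: mix_dens_def mix_dens'_def field_simps)

lemma is_diff_pos_density_mix_dens: "is_diff_pos_density (density lborel (\<lambda>w. ennreal (mix_dens w))) mix_dens"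
  unfolding is_diff_pos_density_def
  using mix_dens_nonneg mix_dens_pos mix_dens_has_derivative by (auto simp: real_differentiable_def)

lemma is_diff_pos_density_mix_dens_unique:
  assumes f: "is_diff_pos_density (density lborel (\<lambda>w. ennreal (mix_dens w))) f" and w: "w > 0"
  shows "f w = mix_dens w" and "deriv f w = mix_dens' w"
proof -
  from f have [measurable]: "f \<in> borel_measurable borel" and f_nonneg: "\<And>w. 0 \<le> f w"
    and dens: "density lborel f = density lborel (\<lambda>w. ennreal (mix_dens w))"
    and diff: "\<And>w. w > 0 \<Longrightarrow> f differentiable (at w)"
    unfolding is_diff_pos_density_def by auto
  have "AE w in lborel. ennreal (f w) = ennreal (mix_dens w)"
    using dens sigma_finite_measure.density_unique_iff[OF lborel.sigma_finite_measure_axioms,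
        of "\<lambda>w. ennreal (f w)" "\<lambda>w. ennreal (mix_dens w)"] by simp
  then have ae: "AE w in lborel. f w = mix_dens w"
    by eventually_elim (use f_nonneg mix_dens_nonneg in simp)
  have cont: "continuous_on {0<..} f"
    by (intro continuous_at_imp_continuous_on ballI differentiable_imp_continuous_within diff) simp
  have eq: "f v = mix_dens v" if "v > 0" for v
    using AE_eq_continuous_on_imp_eq[OF open_greaterThan cont continuous_on_mix_dens ae] that by simp
  then show "f w = mix_dens w" using w .
  have "(f has_real_derivative mix_dens' w) (at w)"
    by (rule has_field_derivative_transform_within_open[OF mix_dens_has_derivative[OF w], where S = "{0<..}"])
       (use w eq in auto)
  then show "deriv f w = mix_dens' w" by (rule DERIV_imp_deriv)
qed

definition fisher_term :: "nat \<Rightarrow> real \<Rightarrow> real" where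
  "fisher_term k w = (real k)\<^sup>2 * p k * gamma_dens (alpha + real k) b w / w"

lemma fisher_term_nonneg: "fisher_term k w \<ge> 0"
  unfolding fisher_term_def using p_nonneg[of k] gamma_dens_nonneg[of "alpha + real k" b w] alpha
  by (cases "w > 0") (auto simp: gamma_dens_def)

lemma nn_integral_fisher_term:
  "(\<integral>\<^sup>+w. ennreal (fisher_term k w) \<partial>lborel) = ennreal ((real k)\<^sup>2 * p k * b / (alpha + real k - 1))"
proof (cases "k = 0")
  case False
  then have a: "alpha + real k - 1 > 0" using alpha by simp
  define C where "C = (real k)\<^sup>2 * p k * b / (alpha + real k - 1)"
  have "C \<ge> 0" unfolding C_def using a b p_nonneg[of k] by simp
  have "fisher_term k w = (real k)\<^sup>2 * p k * (gamma_dens (alpha + real k) b w / w)" for w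
    by (simp add: fisher_term_def)
  also have "\<dots> w = C * gamma_dens (alpha + real k - 1) b w" for w
    using gamma_dens_div[of "alpha + real k" b w] a b by (simp add: C_def)
  finally have "(\<integral>\<^sup>+w. ennreal (fisher_term k w) \<partial>lborel)
      = (\<integral>\<^sup>+w. ennreal C * ennreal (gamma_dens (alpha + real k - 1) b w) \<partial>lborel)"
    using \<open>C \<ge> 0\<close> by (simp add: ennreal_mult gamma_dens_nonneg[OF a])
  also have "\<dots> = ennreal C"
    using nn_integral_gamma_dens[OF a b] by (simp add: nn_integral_cmult)
  finally show ?thesis unfolding C_def .
qed (simp add: fisher_term_def)

text \<open>Cauchy--Schwarz with weights \<open>v\<^sub>k = c\<^sub>k w\<^sup>k\<close> gives \<open>(w P'(w))\<^sup>2 \<le> P(w) \<Sum>\<^sub>k k\<^sup>2 v\<^sub>k\<close>.\<close>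

lemma mix_dens_mult_score_square_le:
  assumes w: "w > 0"
  shows "mix_dens w * (w * (pseries' w / pseries w)\<^sup>2) \<le> (\<Sum>k. fisher_term k w)"
    and "summable (\<lambda>k. fisher_term k w)"
proof -
  have P: "pseries w > 0" using pseries_pos w by simp
  have K: "base_factor w > 0" using base_factor_pos[OF w] .
  have term_eq: "fisher_term k w = base_factor w / w * ((real k)\<^sup>2 * (pcoeff k * w ^ k))" for k
    unfolding fisher_term_def using weight_mult_gamma_dens_eq[OF w, of k] by (simp add: field_simps)
  show "summable (\<lambda>k. fisher_term k w)"
    unfolding term_eq by (intro summable_mult summable_square_pcoeff_power)
  have "(w * pseries' w)\<^sup>2 \<le> pseries w * (\<Sum>k. (real k)\<^sup>2 * (pcoeff k * w ^ k))"
    unfolding mult_pseries'_eq pseries_def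
    using pcoeff_nonneg w
    by (intro suminf_first_moment_square_le summable_pcoeff_power summable_square_pcoeff_power) simp
  then have "mix_dens w * (w * (pseries' w / pseries w)\<^sup>2)
      \<le> base_factor w / w * (\<Sum>k. (real k)\<^sup>2 * (pcoeff k * w ^ k))"
    using w P K by (simp add: mix_dens_def power2_eq_square field_simps)
  also have "\<dots> = (\<Sum>k. fisher_term k w)"
    unfolding term_eq by (rule suminf_mult[OF summable_square_pcoeff_power, symmetric])
  finally show "mix_dens w * (w * (pseries' w / pseries w)\<^sup>2) \<le> (\<Sum>k. fisher_term k w)" .
qed

lemma mix_dens_mult_score_square_le_suminf:
  "ennreal (mix_dens w) * ennreal (w * (pseries' w / pseries w)\<^sup>2) \<le> (\<Sum>k. ennreal (fisher_term k w))"
proof (cases "w > 0")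
  case True
  then have "ennreal (mix_dens w) * ennreal (w * (pseries' w / pseries w)\<^sup>2) \<le> ennreal (\<Sum>k. fisher_term k w)"
    using mix_dens_mult_score_square_le(1)[OF True] mix_dens_nonneg
    by (simp add: ennreal_leI flip: ennreal_mult)
  also have "\<dots> = (\<Sum>k. ennreal (fisher_term k w))"
    using mix_dens_mult_score_square_le(2)[OF True] fisher_term_nonneg by (simp add: suminf_ennreal2)
  finally show ?thesis .
qed (simp add: mix_dens_def)

lemma fisher_coefficient_le:
  "(real k)\<^sup>2 * p k * b / (alpha + real k - 1) \<le> (if alpha \<ge> 1 then 1 else 1 / alpha) * b * (real k * p k)"
proof (cases "k = 0")
  case False
  then have "real k / (alpha + real k - 1) \<le> (if alpha \<ge> 1 then 1 else 1 / alpha)"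
    using nat_div_add_minus_one_le[OF alpha] by simp
  then have "real k / (alpha + real k - 1) * (b * (real k * p k))
               \<le> (if alpha \<ge> 1 then 1 else 1 / alpha) * (b * (real k * p k))"
    using b p_nonneg[of k] by (intro mult_right_mono) auto
  then show ?thesis by (simp add: power2_eq_square field_simps)
qed simp

lemma nn_integral_mix_dens_score_le:
  "(\<integral>\<^sup>+w. ennreal (mix_dens w) * ennreal (w * (pseries' w / pseries w)\<^sup>2) \<partial>lborel)
     \<le> ennreal ((if alpha \<ge> 1 then 1 else 1 / alpha) * b) * (\<Sum>k. ennreal (real k * p k))"
proof -
  let ?C = "if alpha \<ge> 1 then 1 else 1 / alpha"
  have "(\<integral>\<^sup>+w. ennreal (mix_dens w) * ennreal (w * (pseries' w / pseries w)\<^sup>2) \<partial>lborel)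
      \<le> (\<integral>\<^sup>+w. (\<Sum>k. ennreal (fisher_term k w)) \<partial>lborel)"
    by (intro nn_integral_mono mix_dens_mult_score_square_le_suminf)
  also have "\<dots> = (\<Sum>k. \<integral>\<^sup>+w. ennreal (fisher_term k w) \<partial>lborel)"
    by (intro nn_integral_suminf) (simp add: fisher_term_def)
  also have "\<dots> = (\<Sum>k. ennreal ((real k)\<^sup>2 * p k * b / (alpha + real k - 1)))"
    by (simp add: nn_integral_fisher_term)
  also have "\<dots> \<le> (\<Sum>k. ennreal (?C * b) * ennreal (real k * p k))"
  proof (intro suminf_le summableI)
    fix k
    have "0 \<le> ?C * b" "0 \<le> real k * p k" using alpha b p_nonneg[of k] by simp_all
    with fisher_coefficient_le[of k] show "ennreal ((real k)\<^sup>2 * p k * b / (alpha + real k - 1))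
        \<le> ennreal (?C * b) * ennreal (real k * p k)"
      by (simp only: ennreal_leI flip: ennreal_mult)
  qed
  also have "\<dots> = ennreal (?C * b) * (\<Sum>k. ennreal (real k * p k))"
    by (rule ennreal_suminf_cmult)
  finally show ?thesis .
qed

lemma loc_fisher_mix_dens_le:
  assumes rate: "lam / (1 - tau) = b"
    and f: "is_diff_pos_density (density lborel (\<lambda>w. ennreal (mix_dens w))) f"
  shows "loc_fisher alpha lam tau (density lborel (\<lambda>w. ennreal (mix_dens w))) f
           \<le> ennreal ((if alpha \<ge> 1 then 1 else 1 / alpha) * b) * (\<Sum>k. ennreal (real k * p k))"
proof -
  have score: "deriv f w / f w - (alpha - 1) / w + lam / (1 - tau) = pseries' w / pseries w" if "w > 0" for w
    using mix_dens_score_eq[OF that] is_diff_pos_density_mix_dens_unique[OF f that] rate by simp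
  have "mix_dens w > 0 \<Longrightarrow> w > 0" for w by (auto simp: mix_dens_def split: if_splits)
  then have "AE w in density lborel (\<lambda>w. ennreal (mix_dens w)). w > 0"
    by (subst AE_density) auto
  then have "loc_fisher alpha lam tau (density lborel (\<lambda>w. ennreal (mix_dens w))) f
      = (\<integral>\<^sup>+w. ennreal (w * (pseries' w / pseries w)\<^sup>2) \<partial>density lborel (\<lambda>w. ennreal (mix_dens w)))"
    unfolding loc_fisher_def by (intro nn_integral_cong_AE) (auto elim!: eventually_mono simp: score)
  also have "\<dots> = (\<integral>\<^sup>+w. ennreal (mix_dens w) * ennreal (w * (pseries' w / pseries w)\<^sup>2) \<partial>lborel)"
    by (subst nn_integral_density) auto
  also have "\<dots> \<le> ennreal ((if alpha \<ge> 1 then 1 else 1 / alpha) * b) * (\<Sum>k. ennreal (real k * p k))"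
    by (rule nn_integral_mix_dens_score_le)
  finally show ?thesis .
qed

end

section \<open>The law of the gamma smart path\<close>

lemma sets_poisson_law[simp, measurable_cong]: "sets (poisson_law m) = sets (count_space UNIV)"
  by (simp add: poisson_law_def)

lemma space_poisson_law[simp]: "space (poisson_law m) = UNIV"
  by (simp add: poisson_law_def)

locale smart_path =
  fixes alpha lam tau :: real
  assumes alpha: "alpha > 0" and lam: "lam > 0" and tau: "0 < tau" "tau < 1"
begin

definition rate :: real where "rate = lam / (1 - tau)"

definition poisson_rate :: real where "poisson_rate = lam * tau / (1 - tau)"

lemma rate_pos: "rate > 0" and poisson_rate_pos: "poisson_rate > 0"
  using lam tau by (simp_all add: rate_def poisson_rate_def)

definition shifted_gamma :: "real \<Rightarrow> real measure" where
  "shifted_gamma y = distr (gamma_law alpha lam) borel (\<lambda>g. (1 - tau) * g + tau * y)"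

definition count_law :: "nat \<Rightarrow> real measure" where
  "count_law k = (if k = 0 then return borel 0 else gamma_law (real k) poisson_rate)"

definition path_given :: "real \<Rightarrow> real measure" where
  "path_given x = bind (Y_cond_law lam tau x) shifted_gamma"

definition poisson_weight :: "nat \<Rightarrow> real \<Rightarrow> real" where
  "poisson_weight k x = (poisson_rate * x) ^ k / fact k * exp (- (poisson_rate * x))"

lemma sets_shifted_gamma[simp]: "sets (shifted_gamma y) = sets borel"
  by (simp add: shifted_gamma_def)

lemma sets_count_law[simp]: "sets (count_law k) = sets borel"
  by (simp add: count_law_def)

lemma space_count_law[simp]: "space (count_law k) = UNIV"
  using sets_eq_imp_space_eq[OF sets_count_law] by simp

lemma shifted_gamma_eq_density:
  "shifted_gamma y = density lborel (\<lambda>w. ennreal (gamma_dens alpha rate (w - tau * y)))"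
  unfolding shifted_gamma_def rate_def
  using distr_gamma_law_affine[of "1 - tau" lam alpha "tau * y"] tau lam by simp

lemma measurable_shifted_gamma[measurable]: "shifted_gamma \<in> measurable borel (subprob_algebra borel)"
proof -
  have "gamma_law alpha lam \<in> space (subprob_algebra borel)"
    using prob_space_gamma_law[OF alpha lam]
    by (auto simp: space_subprob_algebra prob_space_imp_subprob_space)
  then show ?thesis
    unfolding shifted_gamma_def[abs_def]
    by (intro measurable_distr2[where M = borel]) measurable
qed

lemma measurable_count_law: "count_law \<in> measurable (count_space UNIV) (subprob_algebra borel)"
  using prob_space_gamma_law[OF _ poisson_rate_pos]
  by (auto simp: count_law_def space_subprob_algebra prob_space_imp_subprob_space subprob_space_return)

lemma Y_cond_law_eq_bind: "Y_cond_law lam tau x = bind (poisson_law (poisson_rate * x)) count_law"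
  unfolding Y_cond_law_def count_law_def[abs_def] poisson_rate_def by (simp add: ac_simps)

text \<open>Given \<open>K = k\<close>, the smart path is \<open>(1 - \<tau>) \<gamma>(\<alpha>, \<lambda>) + \<tau> \<gamma>(k, \<lambda> \<tau> / (1 - \<tau>))\<close>, and both
  summands are gamma variables with the common rate \<open>\<lambda> / (1 - \<tau>)\<close>.\<close>

lemma nn_integral_emeasure_shifted_gamma:
  assumes a: "a > 0" and A[measurable]: "A \<in> sets borel"
  shows "(\<integral>\<^sup>+y. emeasure (shifted_gamma y) A \<partial>gamma_law a poisson_rate)
           = emeasure (gamma_law (alpha + a) rate) A"
proof -
  have "(\<integral>\<^sup>+y. emeasure (shifted_gamma y) A \<partial>gamma_law a poisson_rate)
      = (\<integral>\<^sup>+y. ennreal (gamma_dens a poisson_rate y) * emeasure (shifted_gamma y) A \<partial>lborel)"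
    by (simp add: gamma_law_def nn_integral_density)
  also have "\<dots> = ennreal \<bar>1 / tau\<bar> * (\<integral>\<^sup>+u. ennreal (gamma_dens a poisson_rate (0 + 1 / tau * u))
                                               * emeasure (shifted_gamma (0 + 1 / tau * u)) A \<partial>lborel)"
    using tau by (intro nn_integral_real_affine) auto
  also have "\<dots> = (\<integral>\<^sup>+u. ennreal (gamma_dens a rate u) * emeasure (shifted_gamma (u / tau)) A \<partial>lborel)"
  proof -
    have "ennreal (1 / tau) * ennreal (gamma_dens a poisson_rate (1 / tau * u)) = ennreal (gamma_dens a rate u)" for u
      using gamma_dens_rescale[of "1 / tau" rate a u] tau rate_pos
      by (simp add: poisson_rate_def rate_def flip: ennreal_mult')
    then show ?thesis using tau
      by (subst nn_integral_cmult[symmetric]) (auto simp: mult.assoc[symmetric] intro!: nn_integral_cong)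
  qed
  also have "\<dots> = (\<integral>\<^sup>+u. \<integral>\<^sup>+w. ennreal (gamma_dens a rate u)
                     * (ennreal (gamma_dens alpha rate (w - u)) * indicator A w) \<partial>lborel \<partial>lborel)"
    using tau by (simp add: shifted_gamma_eq_density emeasure_density nn_integral_cmult)
  also have "\<dots> = (\<integral>\<^sup>+w. (\<integral>\<^sup>+u. ennreal (gamma_dens alpha rate (w - u))
                     * ennreal (gamma_dens a rate u) \<partial>lborel) * indicator A w \<partial>lborel)"
    by (subst lborel_pair.Fubini') (auto simp: ac_simps nn_integral_cmult intro!: nn_integral_cong)
  also have "\<dots> = emeasure (gamma_law (alpha + a) rate) A"
    by (simp add: gamma_dens_convolution[OF alpha a rate_pos] gamma_law_def emeasure_density)
  finally show ?thesis .
qed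

lemma bind_count_law_shifted_gamma: "bind (count_law k) shifted_gamma = gamma_law (alpha + real k) rate"
proof (rule measure_eqI)
  fix A assume "A \<in> sets (bind (count_law k) shifted_gamma)"
  then have A[measurable]: "A \<in> sets borel"
    using measurable_count_law by (subst (asm) sets_bind[where N = borel]) (auto simp: space_subprob_algebra)
  have "emeasure (bind (count_law k) shifted_gamma) A = (\<integral>\<^sup>+y. emeasure (shifted_gamma y) A \<partial>count_law k)"
    using measurable_count_law by (intro emeasure_bind[where N = borel]) (auto simp: count_law_def)
  also have "\<dots> = emeasure (gamma_law (alpha + real k) rate) A"
  proof (cases "k = 0")
    case True
    then show ?thesis
      by (simp add: count_law_def nn_integral_return shifted_gamma_eq_density gamma_law_def emeasure_density)
  qed (simp add: count_law_def nn_integral_emeasure_shifted_gamma)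
  finally show "emeasure (bind (count_law k) shifted_gamma) A = emeasure (gamma_law (alpha + real k) rate) A" .
qed (use measurable_count_law in \<open>subst sets_bind[where N = borel], auto simp: space_subprob_algebra\<close>)

lemma path_given_eq_bind: "path_given x = bind (poisson_law (poisson_rate * x)) (\<lambda>k. gamma_law (alpha + real k) rate)"
proof -
  have "count_law \<in> measurable (poisson_law (poisson_rate * x)) (subprob_algebra borel)"
    using measurable_count_law by (simp add: measurable_cong_sets[OF sets_poisson_law refl])
  then show ?thesis
    unfolding path_given_def Y_cond_law_eq_bind
    by (simp add: bind_assoc[OF _ measurable_shifted_gamma] bind_count_law_shifted_gamma)
qed

lemma poisson_weight_nonneg: "x \<ge> 0 \<Longrightarrow> poisson_weight k x \<ge> 0"
  unfolding poisson_weight_def using poisson_rate_pos by simp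

lemma poisson_weight_sums: "x \<ge> 0 \<Longrightarrow> (\<lambda>k. poisson_weight k x) sums 1"
  unfolding poisson_weight_def using poisson_rate_pos by (intro poisson_pmf_sums) simp

lemma poisson_weight_le_1: "x \<ge> 0 \<Longrightarrow> poisson_weight k x \<le> 1"
  using sum_le_suminf[OF sums_summable[OF poisson_weight_sums], of x "{k}"]
    poisson_weight_nonneg sums_unique[OF poisson_weight_sums] by fastforce

lemma borel_measurable_poisson_weight[measurable]: "poisson_weight k \<in> borel_measurable borel"
  unfolding poisson_weight_def by measurable

definition path_dens :: "real \<Rightarrow> real \<Rightarrow> ennreal" where
  "path_dens x w = (\<Sum>k. ennreal (poisson_weight k x * gamma_dens (alpha + real k) rate w))"

lemma borel_measurable_path_dens[measurable]: "(\<lambda>(x, w). path_dens x w) \<in> borel_measurable (borel \<Otimes>\<^sub>M borel)"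
  unfolding path_dens_def by measurable

lemma sets_path_given[simp, measurable_cong]: "sets (path_given x) = sets borel"
  unfolding path_given_eq_bind by (rule sets_bind[where N = borel]) auto

lemma emeasure_path_given:
  assumes A: "A \<in> sets borel"
  shows "emeasure (path_given x) A
           = (\<Sum>k. ennreal (poisson_weight k x) * emeasure (gamma_law (alpha + real k) rate) A)"
proof -
  have "(\<lambda>k. gamma_law (alpha + real k) rate) \<in> measurable (poisson_law m) (subprob_algebra borel)" for m
    using prob_space_gamma_law[OF _ rate_pos] alpha
    by (auto simp: measurable_cong_sets[OF sets_poisson_law refl] space_subprob_algebra
        prob_space_imp_subprob_space add_pos_nonneg)
  then have "emeasure (path_given x) A
      = (\<integral>\<^sup>+k. emeasure (gamma_law (alpha + real k) rate) A \<partial>poisson_law (poisson_rate * x))"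
    unfolding path_given_eq_bind using A by (intro emeasure_bind[where N = borel]) auto
  also have "\<dots> = (\<Sum>k. ennreal (poisson_weight k x) * emeasure (gamma_law (alpha + real k) rate) A)"
    by (simp add: poisson_law_def nn_integral_density nn_integral_count_space_nat poisson_weight_def)
  finally show ?thesis .
qed

lemma path_given_eq_density: "path_given x = density lborel (path_dens x)"
proof (rule measure_eqI)
  fix A assume "A \<in> sets (path_given x)"
  then have A[measurable]: "A \<in> sets borel" by simp
  have "emeasure (path_given x) A
      = (\<Sum>k. \<integral>\<^sup>+w. ennreal (poisson_weight k x) * (ennreal (gamma_dens (alpha + real k) rate w) * indicator A w) \<partial>lborel)"
    unfolding emeasure_path_given[OF A] by (simp add: gamma_law_def emeasure_density nn_integral_cmult)
  also have "\<dots> = (\<integral>\<^sup>+w. path_dens x w * indicator A w \<partial>lborel)"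
    unfolding path_dens_def
    by (subst nn_integral_suminf[symmetric])
       (auto simp: ennreal_suminf_multc[symmetric] ennreal_mult'' gamma_dens_nonneg alpha add_pos_nonneg
             mult.assoc intro!: nn_integral_cong suminf_cong)
  finally show "emeasure (path_given x) A = emeasure (density lborel (path_dens x)) A"
    by (simp add: emeasure_density)
qed simp

lemma emeasure_path_given_space: "emeasure (path_given x) (space (path_given x)) = (\<Sum>k. ennreal (poisson_weight k x))"
  using emeasure_path_given[of UNIV x] prob_space.emeasure_space_1[OF prob_space_gamma_law[OF _ rate_pos]] alpha
  by (simp add: add_pos_nonneg sets_eq_imp_space_eq[OF sets_path_given])

lemma prob_space_path_given: "x \<ge> 0 \<Longrightarrow> prob_space (path_given x)"
  using suminf_ennreal_eq[OF poisson_weight_nonneg poisson_weight_sums, of x]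
  by (intro prob_spaceI) (simp add: emeasure_path_given_space)

text \<open>For \<open>x < 0\<close> the Poisson "law" of negative mean has total mass \<open>> 1\<close>.\<close>

lemma not_subprob_space_path_given: "x < 0 \<Longrightarrow> \<not> subprob_space (path_given x)"
proof
  assume x: "x < 0" and "subprob_space (path_given x)"
  then have "(\<Sum>k. ennreal (poisson_weight k x)) \<le> 1"
    using subprob_space.emeasure_space_le_1 emeasure_path_given_space by metis
  moreover have "ennreal (poisson_weight 0 x) \<le> (\<Sum>k. ennreal (poisson_weight k x))"
    using sum_le_suminf[of "\<lambda>k. ennreal (poisson_weight k x)" "{0}"] by simp
  ultimately have "ennreal (poisson_weight 0 x) \<le> 1" by (rule order_trans[rotated])
  then have "exp (- (poisson_rate * x)) \<le> 1" by (simp add: poisson_weight_def)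
  moreover have "exp (- (poisson_rate * x)) > 1"
    using x poisson_rate_pos by (simp add: mult_pos_neg)
  ultimately show False by simp
qed

lemma measurable_path_given_max: "(\<lambda>x. path_given (max x 0)) \<in> measurable borel (subprob_algebra borel)"
proof (rule measurable_subprob_algebra)
  fix A :: "real set" assume [measurable]: "A \<in> sets borel"
  show "(\<lambda>x. emeasure (path_given (max x 0)) A) \<in> borel_measurable borel"
    by (simp add: path_given_eq_density emeasure_density)
qed (simp_all add: prob_space_imp_subprob_space prob_space_path_given)

lemma smart_path_law_eq_bind_max:
  assumes smu: "sets mu = sets borel" and pos: "AE x in mu. x > 0"
  shows "smart_path_law alpha lam mu tau = bind mu (\<lambda>x. path_given (max x 0))"
proof -
  have space: "space mu = UNIV" using sets_eq_imp_space_eq[OF smu] by simp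
  have "{x. x < 0} \<in> sets mu" using smu by simp
  then have "{x. x < 0} \<in> null_sets mu"
    using pos by (simp add: AE_iff_null_sets eventually_mono)
  then have "bind mu path_given = bind mu (\<lambda>x. path_given (max x 0))"
    using measurable_path_given_max not_subprob_space_path_given
    by (intro bind_eq_bind_off_null_set[where N = borel and S = "{x. x < 0}"])
       (auto simp: smu measurable_cong_sets[OF smu refl] space space_subprob_algebra)
  then show ?thesis
    unfolding smart_path_law_def path_given_def[abs_def] shifted_gamma_def[abs_def] .
qed

definition mix_weight :: "real measure \<Rightarrow> nat \<Rightarrow> real" where
  "mix_weight mu k = enn2real (\<integral>\<^sup>+x. ennreal (poisson_weight k (max x 0)) \<partial>mu)"

context
  fixes mu :: "real measure"
  assumes prob_mu: "prob_space mu" and sets_mu: "sets mu = sets borel"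
begin

lemma space_mu: "space mu = UNIV"
  using sets_eq_imp_space_eq[OF sets_mu] by simp

lemma borel_measurable_mu_iff: "f \<in> borel_measurable mu \<longleftrightarrow> f \<in> borel_measurable borel"
  by (simp add: measurable_cong_sets[OF sets_mu refl])

lemma nn_integral_poisson_weight_le_1: "(\<integral>\<^sup>+x. ennreal (poisson_weight k (max x 0)) \<partial>mu) \<le> 1"
proof -
  have "(\<integral>\<^sup>+x. ennreal (poisson_weight k (max x 0)) \<partial>mu) \<le> (\<integral>\<^sup>+x. 1 \<partial>mu)"
    by (intro nn_integral_mono) (simp add: poisson_weight_le_1)
  then show ?thesis using prob_space.emeasure_space_1[OF prob_mu] by simp
qed

lemma nn_integral_poisson_weight_eq:
  "(\<integral>\<^sup>+x. ennreal (poisson_weight k (max x 0)) \<partial>mu) = ennreal (mix_weight mu k)"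
proof -
  have "(\<integral>\<^sup>+x. ennreal (poisson_weight k (max x 0)) \<partial>mu) < \<top>"
    using nn_integral_poisson_weight_le_1[of k] by (simp add: le_less_trans)
  then show ?thesis unfolding mix_weight_def by simp
qed

lemma gamma_mixture_mix_weight: "gamma_mixture alpha rate (mix_weight mu)"
proof
  fix k
  show "0 \<le> mix_weight mu k" by (simp add: mix_weight_def)
  show "mix_weight mu k \<le> 1"
    using nn_integral_poisson_weight_le_1[of k] by (simp add: mix_weight_def enn2real_leI)
next
  have "(\<integral>\<^sup>+x. ennreal (poisson_weight 0 (max x 0)) \<partial>mu) = (\<integral>\<^sup>+x. ennreal (exp (- (poisson_rate * max x 0))) \<partial>mu)"
    by (simp add: poisson_weight_def)
  moreover have "(\<integral>\<^sup>+x. ennreal (exp (- (poisson_rate * max x 0))) \<partial>mu) \<noteq> 0"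
    using prob_space.AE_False[OF prob_mu]
    by (subst nn_integral_0_iff_AE) (auto simp: borel_measurable_mu_iff)
  ultimately have "ennreal (mix_weight mu 0) \<noteq> 0"
    using nn_integral_poisson_weight_eq[of 0] by simp
  then show "mix_weight mu 0 > 0" by (metis ennreal_eq_0_iff not_le)
qed (use alpha rate_pos in auto)

lemma suminf_mult_mix_weight:
  "(\<Sum>k. ennreal (real k * mix_weight mu k)) = (\<integral>\<^sup>+x. ennreal (poisson_rate * max x 0) \<partial>mu)"
proof -
  have "(\<Sum>k. ennreal (real k * mix_weight mu k))
      = (\<Sum>k. \<integral>\<^sup>+x. ennreal (real k * poisson_weight k (max x 0)) \<partial>mu)"
  proof (rule suminf_cong)
    fix k
    have "ennreal (real k * mix_weight mu k) = ennreal (real k) * (\<integral>\<^sup>+x. ennreal (poisson_weight k (max x 0)) \<partial>mu)"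
      using gamma_mixture.p_nonneg[OF gamma_mixture_mix_weight, of k]
      by (simp add: ennreal_mult nn_integral_poisson_weight_eq)
    also have "\<dots> = (\<integral>\<^sup>+x. ennreal (real k * poisson_weight k (max x 0)) \<partial>mu)"
      by (simp add: ennreal_mult poisson_weight_nonneg nn_integral_cmult borel_measurable_mu_iff)
    finally show "ennreal (real k * mix_weight mu k) = (\<integral>\<^sup>+x. ennreal (real k * poisson_weight k (max x 0)) \<partial>mu)" .
  qed
  also have "\<dots> = (\<integral>\<^sup>+x. (\<Sum>k. ennreal (real k * poisson_weight k (max x 0))) \<partial>mu)"
    by (rule nn_integral_suminf[symmetric]) (simp add: borel_measurable_mu_iff)
  also have "\<dots> = (\<integral>\<^sup>+x. ennreal (poisson_rate * max x 0) \<partial>mu)"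
    using poisson_mean_sums poisson_weight_nonneg poisson_rate_pos
    by (intro nn_integral_cong suminf_ennreal_eq) (auto simp: poisson_weight_def)
  finally show ?thesis .
qed

lemma nn_integral_path_dens_max:
  "(\<integral>\<^sup>+x. path_dens (max x 0) w \<partial>mu) = ennreal (gamma_mixture.mix_dens alpha rate (mix_weight mu) w)"
proof -
  interpret mix: gamma_mixture alpha rate "mix_weight mu" by (rule gamma_mixture_mix_weight)
  have "(\<integral>\<^sup>+x. path_dens (max x 0) w \<partial>mu)
      = (\<Sum>k. \<integral>\<^sup>+x. ennreal (poisson_weight k (max x 0) * gamma_dens (alpha + real k) rate w) \<partial>mu)"
    unfolding path_dens_def by (rule nn_integral_suminf) (simp add: borel_measurable_mu_iff)
  also have "\<dots> = (\<Sum>k. (\<integral>\<^sup>+x. ennreal (poisson_weight k (max x 0)) \<partial>mu)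
                          * ennreal (gamma_dens (alpha + real k) rate w))"
    by (intro suminf_cong)
       (simp add: ennreal_mult'' gamma_dens_nonneg alpha add_pos_nonneg nn_integral_multc borel_measurable_mu_iff)
  also have "\<dots> = ennreal (mix.mix_dens w)"
    unfolding nn_integral_poisson_weight_eq mix.suminf_ennreal_mix_dens[symmetric]
    using mix.p_nonneg by (simp add: ennreal_mult gamma_dens_nonneg alpha add_pos_nonneg)
  finally show ?thesis .
qed

lemma smart_path_law_eq_mix_density:
  assumes pos: "AE x in mu. x > 0"
  shows "smart_path_law alpha lam mu tau
           = density lborel (\<lambda>w. ennreal (gamma_mixture.mix_dens alpha rate (mix_weight mu) w))"
proof -
  interpret mix: gamma_mixture alpha rate "mix_weight mu" by (rule gamma_mixture_mix_weight)
  interpret pair_sigma_finite mu lborel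
    using prob_space_imp_sigma_finite[OF prob_mu] lborel.sigma_finite_measure_axioms
    by (rule pair_sigma_finite.intro)
  have sets_eq: "sets (smart_path_law alpha lam mu tau) = sets borel"
    unfolding smart_path_law_eq_bind_max[OF sets_mu pos]
    using measurable_path_given_max space_mu by (subst sets_bind[where N = borel]) auto
  show ?thesis
  proof (rule measure_eqI)
    fix A assume "A \<in> sets (smart_path_law alpha lam mu tau)"
    then have A[measurable]: "A \<in> sets borel" by (simp add: sets_eq)
    have "emeasure (smart_path_law alpha lam mu tau) A = (\<integral>\<^sup>+x. emeasure (path_given (max x 0)) A \<partial>mu)"
      unfolding smart_path_law_eq_bind_max[OF sets_mu pos]
      using measurable_path_given_max space_mu
      by (intro emeasure_bind[where N = borel]) (auto simp: measurable_cong_sets[OF sets_mu refl])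
    also have "\<dots> = (\<integral>\<^sup>+x. \<integral>\<^sup>+w. path_dens (max x 0) w * indicator A w \<partial>lborel \<partial>mu)"
      by (simp add: path_given_eq_density emeasure_density)
    also have "\<dots> = (\<integral>\<^sup>+w. \<integral>\<^sup>+x. path_dens (max x 0) w * indicator A w \<partial>mu \<partial>lborel)"
    proof -
      have "(\<lambda>(x, w). path_dens (max x 0) w * indicator A w) \<in> borel_measurable (mu \<Otimes>\<^sub>M lborel)"
        by (simp add: measurable_cong_sets[OF sets_pair_measure_cong[OF sets_mu sets_lborel] refl])
      from Fubini'[OF this] show ?thesis by simp
    qed
    also have "\<dots> = (\<integral>\<^sup>+w. (\<integral>\<^sup>+x. path_dens (max x 0) w \<partial>mu) * indicator A w \<partial>lborel)"
      by (intro nn_integral_cong nn_integral_multc) (simp add: borel_measurable_mu_iff)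
    also have "\<dots> = emeasure (density lborel (\<lambda>w. ennreal (mix.mix_dens w))) A"
      by (simp add: nn_integral_path_dens_max emeasure_density)
    finally show "emeasure (smart_path_law alpha lam mu tau) A
        = emeasure (density lborel (\<lambda>w. ennreal (mix.mix_dens w))) A" .
  qed (simp add: sets_eq)
qed

end

end

lemma nn_integral_distr_mult_max:
  assumes [measurable]: "X \<in> borel_measurable M"
    and pos: "AE \<omega> in M. X \<omega> > 0" and int: "integrable M X" and c: "c \<ge> 0"
  shows "(\<integral>\<^sup>+x. ennreal (c * max x 0) \<partial>distr M borel X) = ennreal (c * (\<integral>\<omega>. X \<omega> \<partial>M))"
proof -
  have "(\<integral>\<^sup>+x. ennreal (c * max x 0) \<partial>distr M borel X) = (\<integral>\<^sup>+\<omega>. ennreal (c * X \<omega>) \<partial>M)"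
    using pos by (simp add: nn_integral_distr) (intro nn_integral_cong_AE, auto elim: eventually_mono)
  also have "\<dots> = ennreal (c * (\<integral>\<omega>. X \<omega> \<partial>M))"
    using pos int c by (subst nn_integral_eq_integral) (auto elim: eventually_mono)
  finally show ?thesis .
qed

lemma smart_path_law_fisher_bound:
  fixes M :: "'a measure" and X :: "'a \<Rightarrow> real"
  assumes M: "prob_space M" and X[measurable]: "X \<in> borel_measurable M"
    and pos: "AE \<omega> in M. X \<omega> > 0" and int: "integrable M X"
    and sp: "smart_path alpha lam tau"
  defines "nu \<equiv> smart_path_law alpha lam (distr M borel X) tau"
  shows "\<exists>f. is_diff_pos_density nu f"
    and "is_diff_pos_density nu f \<Longrightarrow> loc_fisher alpha lam tau nu f
           \<le> ennreal ((if alpha \<ge> 1 then 1 else 1 / alpha) * (lam\<^sup>2 * tau / (1 - tau)\<^sup>2) * (\<integral>\<omega>. X \<omega> \<partial>M))"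
proof -
  interpret smart_path alpha lam tau by (rule sp)
  let ?mu = "distr M borel X"
  have prob_mu: "prob_space ?mu" by (rule prob_space.prob_space_distr[OF M X])
  have sets_mu: "sets ?mu = sets borel" by simp
  interpret mix: gamma_mixture alpha rate "mix_weight ?mu"
    by (rule gamma_mixture_mix_weight[OF prob_mu sets_mu])
  have nu: "nu = density lborel (\<lambda>w. ennreal (mix.mix_dens w))"
    unfolding nu_def using pos
    by (intro smart_path_law_eq_mix_density[OF prob_mu sets_mu]) (simp add: AE_distr_iff)
  then show "\<exists>f. is_diff_pos_density nu f"
    using mix.is_diff_pos_density_mix_dens by blast
  assume "is_diff_pos_density nu f"
  then have "loc_fisher alpha lam tau nu f
      \<le> ennreal ((if alpha \<ge> 1 then 1 else 1 / alpha) * rate) * (\<Sum>k. ennreal (real k * mix_weight ?mu k))"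
    unfolding nu by (intro mix.loc_fisher_mix_dens_le) (simp_all add: rate_def)
  also have "\<dots> = ennreal ((if alpha \<ge> 1 then 1 else 1 / alpha) * rate) * ennreal (poisson_rate * (\<integral>\<omega>. X \<omega> \<partial>M))"
    using poisson_rate_pos
    by (simp add: suminf_mult_mix_weight[OF prob_mu sets_mu] nn_integral_distr_mult_max[OF X pos int])
  also have "\<dots> = ennreal ((if alpha \<ge> 1 then 1 else 1 / alpha) * (lam\<^sup>2 * tau / (1 - tau)\<^sup>2) * (\<integral>\<omega>. X \<omega> \<partial>M))"
  proof -
    let ?C = "if alpha \<ge> 1 then 1 else 1 / alpha"
    have "0 \<le> ?C * rate" using rate_pos alpha by simp
    moreover have "rate * poisson_rate = lam\<^sup>2 * tau / (1 - tau)\<^sup>2"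
      by (simp add: rate_def poisson_rate_def power2_eq_square)
    then have "?C * rate * (poisson_rate * (\<integral>\<omega>. X \<omega> \<partial>M))
             = ?C * (lam\<^sup>2 * tau / (1 - tau)\<^sup>2) * (\<integral>\<omega>. X \<omega> \<partial>M)"
      by (metis mult.assoc)
    ultimately show ?thesis by (simp only: ennreal_mult'[symmetric])
  qed
  finally show "loc_fisher alpha lam tau nu f
      \<le> ennreal ((if alpha \<ge> 1 then 1 else 1 / alpha) * (lam\<^sup>2 * tau / (1 - tau)\<^sup>2) * (\<integral>\<omega>. X \<omega> \<partial>M))" .
qed

theorem proposition3p1:
  fixes M :: "'a measure" and X :: "'a \<Rightarrow> real" and alpha lam :: real
  assumes "prob_space M"
    and "X \<in> borel_measurable M"
    and "AE \<omega> in M. X \<omega> > 0"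
    and "integrable M X"
    and "alpha > 0" and "lam > 0"
  shows "(\<forall>tau \<in> {0<..<1}.
           (\<exists>f. is_diff_pos_density (smart_path_law alpha lam (distr M borel X) tau) f) \<and>
           (\<forall>f. is_diff_pos_density (smart_path_law alpha lam (distr M borel X) tau) f \<longrightarrow>
                loc_fisher alpha lam tau (smart_path_law alpha lam (distr M borel X) tau) f < \<infinity>))
       \<and> ((\<integral>\<omega>. X \<omega> \<partial>M) = alpha / lam \<longrightarrow>
         (\<forall>tau \<in> {0<..<1}. \<forall>f. is_diff_pos_density (smart_path_law alpha lam (distr M borel X) tau) f \<longrightarrow>
           (alpha \<ge> 1 \<longrightarrow>
              loc_fisher alpha lam tau (smart_path_law alpha lam (distr M borel X) tau) f
                \<le> ennreal (alpha * lam * tau / (1 - tau)\<^sup>2)) \<and>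
           (alpha < 1 \<longrightarrow>
              loc_fisher alpha lam tau (smart_path_law alpha lam (distr M borel X) tau) f
                \<le> ennreal ((1 + 1 / alpha) * (alpha * lam * tau / (1 - tau)\<^sup>2)))))"
proof -
  have "smart_path alpha lam tau" if "tau \<in> {0<..<1}" for tau
    using that assms(5,6) by unfold_locales auto
  note fisher = smart_path_law_fisher_bound[OF assms(1-4) this]
  show ?thesis
  proof (intro conjI ballI allI impI)
    fix tau f assume "tau \<in> {0<..<1}" "is_diff_pos_density (smart_path_law alpha lam (distr M borel X) tau) f"
    from fisher(2)[OF this] show "loc_fisher alpha lam tau (smart_path_law alpha lam (distr M borel X) tau) f < \<infinity>"
      by (rule order.strict_trans1) simp
  next
    fix tau f assume mean: "(\<integral>\<omega>. X \<omega> \<partial>M) = alpha / lam" and tau: "tau \<in> {0<..<1}"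
      and f: "is_diff_pos_density (smart_path_law alpha lam (distr M borel X) tau) f"
    let ?I = "alpha * lam * tau / (1 - tau)\<^sup>2"
    have "(lam\<^sup>2 * tau / (1 - tau)\<^sup>2) * (\<integral>\<omega>. X \<omega> \<partial>M) = ?I"
      using mean assms(6) by (simp add: power2_eq_square)
    then have bound: "loc_fisher alpha lam tau (smart_path_law alpha lam (distr M borel X) tau) f
        \<le> ennreal ((if alpha \<ge> 1 then 1 else 1 / alpha) * ?I)"
      using fisher(2)[OF tau f] by (metis mult.assoc)
    show "alpha \<ge> 1 \<Longrightarrow> loc_fisher alpha lam tau (smart_path_law alpha lam (distr M borel X) tau) f \<le> ennreal ?I"
      using bound by simp
    have "1 / alpha * ?I \<le> (1 + 1 / alpha) * ?I"
      using tau assms(5,6) by (intro mult_right_mono) auto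
    then show "alpha < 1 \<Longrightarrow> loc_fisher alpha lam tau (smart_path_law alpha lam (distr M borel X) tau) f
        \<le> ennreal ((1 + 1 / alpha) * ?I)"
      using bound by (auto intro: order.trans ennreal_leI)
  qed (rule fisher(1))
qed

end
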